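(* Let $T_{ij,k\ell}\ge0$ ($i,j,k,\ell\in\mathbb N_0$) satisfy $\sum_{i,j\ge0}T_{ij,k\ell}=1$ for all $k,\ell\in\mathbb N_0$, and define $\mathcal R:\ell^1(\mathbb N_0)\to\ell^1(\mathbb N_0)$ by $\mathcal R(0)=0$ and $$\mathcal R(x)_i=\frac{1}{\|x\|_1}\sum_{j,k,\ell\ge0}T_{ij,k\ell}\,x_k x_\ell\qquad (x\neq0).$$ Then $\|\mathcal R(x)-\mathcal R(y)\|_1\le 3\|x-y\|_1$ for all $x,y\in\ell^1(\mathbb N_0)$, and $\|\mathcal R(x)-\mathcal R(y)\|_1\le 2\|x-y\|_1$ for all $x,y\in\mathcal M_r$.
   Context: $\ell^1(\mathbb N_0)$ is the space of real sequences with $\|x\|_1=\sum_{k\ge0}|x_k|<\infty$. $\mathcal M_r$ ($r>0$) denotes the set of (measures on $\mathbb N_0$ identified with) elements $x\in\ell^1(\mathbb N_0)$ of total mass $\|x\|_1=r$. *)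

theory Defs
  imports "HOL-Analysis.Analysis"
begin

definition l1 :: "(nat \<Rightarrow> real) \<Rightarrow> bool" where
  "l1 x \<longleftrightarrow> summable (\<lambda>k. \<bar>x k\<bar>)"

definition l1norm :: "(nat \<Rightarrow> real) \<Rightarrow> real" where
  "l1norm x = (\<Sum>k. \<bar>x k\<bar>)"

definition Rop :: "(nat \<Rightarrow> nat \<Rightarrow> nat \<Rightarrow> nat \<Rightarrow> real) \<Rightarrow> (nat \<Rightarrow> real) \<Rightarrow> (nat \<Rightarrow> real)" where
  "Rop T x = (if x = (\<lambda>_. 0) then (\<lambda>_. 0)
     else (\<lambda>i. (1 / l1norm x) * (\<Sum>\<^sub>\<infinity>(j,k,l)\<in>UNIV. T i j k l * x k * x l)))"

end

theory Submission
  imports Defs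
begin

text \<open>
  Write \<open>R(x) = Q(x,x) / \<parallel>x\<parallel>\<close> with the bilinear map
  \<open>Q(a,b)\<^sub>i = \<Sum>\<^sub>j\<^sub>,\<^sub>k\<^sub>,\<^sub>l T\<^sub>i\<^sub>j\<^sub>,\<^sub>k\<^sub>l a\<^sub>k b\<^sub>l\<close>.
  Since every column of \<open>T\<close> is a probability distribution, \<open>\<parallel>Q(a,b)\<parallel> \<le> \<parallel>a\<parallel> \<parallel>b\<parallel>\<close>.
  For \<open>\<parallel>y\<parallel> \<le> \<parallel>x\<parallel>\<close> split
  \<open>R(x) - R(y) = (Q(x-y,x) + Q(y,x-y)) / \<parallel>x\<parallel> + (1/\<parallel>x\<parallel> - 1/\<parallel>y\<parallel>) Q(y,y)\<close>;
  the first term has norm at most \<open>(1 + \<parallel>y\<parallel>/\<parallel>x\<parallel>) \<parallel>x-y\<parallel> \<le> 2 \<parallel>x-y\<parallel>\<close>, the second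
  at most \<open>(\<parallel>x\<parallel> - \<parallel>y\<parallel>) \<parallel>y\<parallel>/\<parallel>x\<parallel> \<le> \<parallel>x\<parallel> - \<parallel>y\<parallel>\<close>. The reverse triangle inequality turns
  this into the constant 3, and on a sphere \<open>\<M>\<^sub>r\<close> the second term vanishes.
\<close>

lemma has_sum_product_nonneg:
  fixes f :: "'a \<Rightarrow> real" and g :: "'b \<Rightarrow> real"
  assumes f: "(f has_sum s) A" and g: "(g has_sum t) B"
    and "\<And>x. x \<in> A \<Longrightarrow> f x \<ge> 0" and "\<And>y. y \<in> B \<Longrightarrow> g y \<ge> 0"
  shows "((\<lambda>(x, y). f x * g y) has_sum s * t) (A \<times> B)"
proof (rule has_sum_SigmaI)
  have row: "((\<lambda>y. f x * g y) has_sum f x * t) B" for x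
    using has_sum_cmult_right[OF g] .
  have col: "((\<lambda>x. f x * t) has_sum s * t) A"
    using has_sum_cmult_left[OF f] .
  show "((\<lambda>y. (\<lambda>(x, y). f x * g y) (x, y)) has_sum f x * t) B" for x
    using row by simp
  show "((\<lambda>x. f x * t) has_sum s * t) A" by (fact col)
  show "(\<lambda>(x, y). f x * g y) summable_on A \<times> B"
    using row col assms(3,4) by (intro summable_on_SigmaI) (auto intro: has_sum_imp_summable)
qed

lemma has_sum_stochastic_kernel_mult:
  fixes K :: "'x \<Rightarrow> 'y \<Rightarrow> real" and c :: "'y \<Rightarrow> real"
  assumes K_nonneg: "\<And>x y. x \<in> A \<Longrightarrow> y \<in> B \<Longrightarrow> K x y \<ge> 0"
    and K_total: "\<And>y. y \<in> B \<Longrightarrow> ((\<lambda>x. K x y) has_sum 1) A"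
    and c: "(c has_sum s) B" and c_nonneg: "\<And>y. y \<in> B \<Longrightarrow> c y \<ge> 0"
  shows "((\<lambda>(y, x). K x y * c y) has_sum s) (B \<times> A)"
proof (rule has_sum_SigmaI)
  have row: "((\<lambda>x. K x y * c y) has_sum c y) A" if "y \<in> B" for y
    using has_sum_cmult_left[OF K_total[OF that], of "c y"] by simp
  then show "((\<lambda>x. (\<lambda>(y, x). K x y * c y) (y, x)) has_sum c y) A" if "y \<in> B" for y
    using that by simp
  show "(c has_sum s) B" by (fact c)
  show "(\<lambda>(y, x). K x y * c y) summable_on B \<times> A"
    using row c c_nonneg K_nonneg by (intro summable_on_SigmaI) (auto intro: has_sum_imp_summable)
qed

lemma l1_has_sum: "l1 x \<Longrightarrow> ((\<lambda>k. \<bar>x k\<bar>) has_sum l1norm x) UNIV"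
  unfolding l1_def l1norm_def by (rule sums_nonneg_imp_has_sum) (auto intro: summable_sums)

lemma l1norm_nonneg: "l1 x \<Longrightarrow> l1norm x \<ge> 0"
  unfolding l1_def l1norm_def by (simp add: suminf_nonneg)

lemma l1_add: "l1 x \<Longrightarrow> l1 y \<Longrightarrow> l1 (\<lambda>k. x k + y k)"
  unfolding l1_def
  by (rule summable_comparison_test[where g = "\<lambda>k. \<bar>x k\<bar> + \<bar>y k\<bar>"])
    (auto intro: summable_add abs_triangle_ineq)

lemma l1_scale: "l1 x \<Longrightarrow> l1 (\<lambda>k. c * x k)"
  unfolding l1_def by (simp add: abs_mult summable_mult)

lemma l1_diff: "l1 x \<Longrightarrow> l1 y \<Longrightarrow> l1 (\<lambda>k. x k - y k)"
  using l1_add[of x "\<lambda>k. -1 * y k"] l1_scale[of y "-1"] by simp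

lemma l1norm_add_le: "l1 x \<Longrightarrow> l1 y \<Longrightarrow> l1norm (\<lambda>k. x k + y k) \<le> l1norm x + l1norm y"
  unfolding l1norm_def
  using l1_add[of x y] suminf_add[of "\<lambda>k. \<bar>x k\<bar>" "\<lambda>k. \<bar>y k\<bar>"]
  by (auto simp: l1_def intro!: suminf_le abs_triangle_ineq summable_add)

lemma l1norm_scale: "l1 x \<Longrightarrow> l1norm (\<lambda>k. c * x k) = \<bar>c\<bar> * l1norm x"
  unfolding l1_def l1norm_def by (simp add: abs_mult suminf_mult)

lemma l1norm_diff_commute: "l1norm (\<lambda>k. x k - y k) = l1norm (\<lambda>k. y k - x k)"
  unfolding l1norm_def by (simp add: abs_minus_commute)

lemma l1norm_reverse_triangle:
  assumes "l1 x" "l1 y"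
  shows "\<bar>l1norm x - l1norm y\<bar> \<le> l1norm (\<lambda>k. x k - y k)"
proof -
  have "l1norm u \<le> l1norm (\<lambda>k. u k - v k) + l1norm v" if "l1 u" "l1 v" for u v
    using l1norm_add_le[OF l1_diff[OF that] that(2)] by simp
  from this[OF assms] this[OF assms(2,1)] show ?thesis
    using l1norm_diff_commute[of x y] by linarith
qed

lemma Rop_split_estimate:
  fixes nx ny d :: real
  assumes "0 \<le> ny" "ny \<le> nx" "0 \<le> d"
  shows "\<bar>1 / nx\<bar> * (d * nx + ny * d) + \<bar>1 / nx - 1 / ny\<bar> * (ny * ny) \<le> 2 * d + (nx - ny)"
proof (rule add_mono)
  show "\<bar>1 / nx\<bar> * (d * nx + ny * d) \<le> 2 * d"
    using assms by (cases "nx = 0") (auto simp: field_simps mult_left_mono)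
  show "\<bar>1 / nx - 1 / ny\<bar> * (ny * ny) \<le> nx - ny"
  proof (cases "ny = 0")
    case False
    with assms have "0 < ny" by simp
    with assms have "\<bar>1 / nx - 1 / ny\<bar> * (ny * ny) = (nx - ny) * (ny / nx)"
      by (simp add: abs_of_nonpos field_simps)
    also have "\<dots> \<le> nx - ny"
      using \<open>0 < ny\<close> assms by (intro mult_left_le) auto
    finally show ?thesis .
  qed (use assms in simp)
qed

definition Qop ::
    "(nat \<Rightarrow> nat \<Rightarrow> nat \<Rightarrow> nat \<Rightarrow> real) \<Rightarrow> (nat \<Rightarrow> real) \<Rightarrow> (nat \<Rightarrow> real) \<Rightarrow> nat \<Rightarrow> real"
  where "Qop T a b i = (\<Sum>\<^sub>\<infinity>(j,k,l)\<in>UNIV. T i j k l * a k * b l)"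

text \<open>This holds also for \<open>x = 0\<close>, where both sides vanish (\<open>0 / 0 = 0\<close>).\<close>
lemma Rop_eq_Qop: "Rop T x i = Qop T x x i / l1norm x"
  by (simp add: Rop_def Qop_def split_def)

locale stochastic_kernel =
  fixes T :: "nat \<Rightarrow> nat \<Rightarrow> nat \<Rightarrow> nat \<Rightarrow> real"
  assumes nonneg: "\<And>i j k l. T i j k l \<ge> 0"
    and total: "\<And>k l. ((\<lambda>(i,j). T i j k l) has_sum 1) UNIV"
begin

lemma has_sum_abs_Qop_terms:
  assumes "l1 a" "l1 b"
  shows "((\<lambda>(i,j,k,l). \<bar>T i j k l * a k * b l\<bar>) has_sum l1norm a * l1norm b) UNIV"
proof -
  have "?thesis \<longleftrightarrow>
      ((\<lambda>(y, x). (\<lambda>(i,j) (k,l). T i j k l) x y * (\<lambda>(k,l). \<bar>a k\<bar> * \<bar>b l\<bar>) y)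
        has_sum l1norm a * l1norm b) (UNIV \<times> UNIV)"
    by (rule has_sum_reindex_bij_witness[where j = "\<lambda>(i,j,k,l). ((k,l),(i,j))"
          and i = "\<lambda>((k,l),(i,j)). (i,j,k,l)"])
      (auto simp: abs_mult nonneg)
  also have \<dots>
  proof (rule has_sum_stochastic_kernel_mult)
    show "((\<lambda>x. (\<lambda>(i,j) (k,l). T i j k l) x y) has_sum 1) UNIV" for y
      using total[of "fst y" "snd y"] by (simp add: split_def)
    show "((\<lambda>(k,l). \<bar>a k\<bar> * \<bar>b l\<bar>) has_sum l1norm a * l1norm b) UNIV"
      using has_sum_product_nonneg[OF l1_has_sum[OF assms(1)] l1_has_sum[OF assms(2)]] by simp
  qed (auto simp: nonneg)
  finally show ?thesis .
qed

lemma
  assumes "l1 a" "l1 b"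
  shows summable_abs_Qop_row: "(\<lambda>(j,k,l). \<bar>T i j k l * a k * b l\<bar>) summable_on UNIV"
    and has_sum_abs_Qop_rows:
      "((\<lambda>i. \<Sum>\<^sub>\<infinity>(j,k,l). \<bar>T i j k l * a k * b l\<bar>) has_sum l1norm a * l1norm b) UNIV"
proof -
  have total_sum: "((\<lambda>(i,j,k,l). \<bar>T i j k l * a k * b l\<bar>) has_sum l1norm a * l1norm b) (UNIV \<times> UNIV)"
    using has_sum_abs_Qop_terms[OF assms] by simp
  show row: "(\<lambda>(j,k,l). \<bar>T i j k l * a k * b l\<bar>) summable_on UNIV" for i
    using summable_on_SigmaD1[OF has_sum_imp_summable[OF total_sum]] by simp
  show "((\<lambda>i. \<Sum>\<^sub>\<infinity>(j,k,l). \<bar>T i j k l * a k * b l\<bar>) has_sum l1norm a * l1norm b) UNIV"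
    using has_sum_Sigma'[OF total_sum] row by (simp add: has_sum_infsum)
qed

lemma summable_Qop_row:
  assumes "l1 a" "l1 b"
  shows "(\<lambda>(j,k,l). T i j k l * a k * b l) summable_on UNIV"
  by (rule abs_summable_summable) (use summable_abs_Qop_row[OF assms] in \<open>simp add: split_def\<close>)

lemma abs_Qop_le:
  assumes "l1 a" "l1 b"
  shows "\<bar>Qop T a b i\<bar> \<le> (\<Sum>\<^sub>\<infinity>(j,k,l). \<bar>T i j k l * a k * b l\<bar>)"
proof -
  have "norm (Qop T a b i) \<le> (\<Sum>\<^sub>\<infinity>p. norm ((\<lambda>(j,k,l). T i j k l * a k * b l) p))"
    unfolding Qop_def
    by (rule norm_infsum_bound) (use summable_abs_Qop_row[OF assms] in \<open>simp add: split_def\<close>)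
  then show ?thesis by (simp add: split_def)
qed

lemma l1_Qop:
  assumes "l1 a" "l1 b"
  shows "l1 (Qop T a b)"
  unfolding l1_def
proof (rule summable_comparison_test)
  show "\<exists>N. \<forall>i\<ge>N. norm \<bar>Qop T a b i\<bar> \<le> (\<Sum>\<^sub>\<infinity>(j,k,l). \<bar>T i j k l * a k * b l\<bar>)"
    using abs_Qop_le[OF assms] by simp
  show "summable (\<lambda>i. \<Sum>\<^sub>\<infinity>(j,k,l). \<bar>T i j k l * a k * b l\<bar>)"
    using has_sum_imp_sums[OF has_sum_abs_Qop_rows[OF assms]] by (rule sums_summable)
qed

lemma l1norm_Qop_le:
  assumes "l1 a" "l1 b"
  shows "l1norm (Qop T a b) \<le> l1norm a * l1norm b"
proof -
  have rows: "(\<lambda>i. \<Sum>\<^sub>\<infinity>(j,k,l). \<bar>T i j k l * a k * b l\<bar>) sums (l1norm a * l1norm b)"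
    using has_sum_abs_Qop_rows[OF assms] by (rule has_sum_imp_sums)
  have "l1norm (Qop T a b) \<le> (\<Sum>i. \<Sum>\<^sub>\<infinity>(j,k,l). \<bar>T i j k l * a k * b l\<bar>)"
    unfolding l1norm_def[of "Qop T a b"]
    using abs_Qop_le[OF assms] l1_Qop[OF assms] rows by (intro suminf_le) (auto simp: l1_def sums_iff)
  also have "\<dots> = l1norm a * l1norm b"
    using rows by (rule sums_unique[symmetric])
  finally show ?thesis .
qed

lemma Qop_diag_diff:
  assumes "l1 x" "l1 y"
  shows "Qop T x x i - Qop T y y i = Qop T (\<lambda>k. x k - y k) x i + Qop T y (\<lambda>k. x k - y k) i"
proof -
  let ?f = "\<lambda>(j,k,l). T i j k l * (x k - y k) * x l"
  let ?g = "\<lambda>(j,k,l). T i j k l * y k * (x l - y l)"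
  let ?h = "\<lambda>(j,k,l). T i j k l * y k * y l"
  have f: "?f summable_on UNIV" and g: "?g summable_on UNIV" and h: "?h summable_on UNIV"
    using summable_Qop_row l1_diff assms by blast+
  have "Qop T (\<lambda>k. x k - y k) x i + Qop T y (\<lambda>k. x k - y k) i + Qop T y y i
      = (\<Sum>\<^sub>\<infinity>p. ?f p + ?g p + ?h p)"
    unfolding Qop_def using f g h by (simp add: infsum_add summable_on_add)
  also have "\<dots> = Qop T x x i"
    unfolding Qop_def by (rule infsum_cong) (auto simp: algebra_simps)
  finally show ?thesis by simp
qed

lemma l1_Rop: "l1 x \<Longrightarrow> l1 (Rop T x)"
  using l1_scale[OF l1_Qop, of x x "1 / l1norm x"] by (simp add: Rop_eq_Qop[abs_def])

lemma l1norm_Rop_diff_le_of_le: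
  assumes x: "l1 x" and y: "l1 y" and le: "l1norm y \<le> l1norm x"
  shows "l1norm (\<lambda>i. Rop T x i - Rop T y i) \<le> 2 * l1norm (\<lambda>k. x k - y k) + (l1norm x - l1norm y)"
proof -
  define nx ny d where "nx = l1norm x" and "ny = l1norm y" and "d = l1norm (\<lambda>k. x k - y k)"
  have xy: "l1 (\<lambda>k. x k - y k)" using l1_diff[OF x y] .
  have "ny \<ge> 0" "d \<ge> 0" unfolding ny_def d_def using l1norm_nonneg y xy by blast+
  define U where "U i = Qop T (\<lambda>k. x k - y k) x i + Qop T y (\<lambda>k. x k - y k) i" for i
  have U: "l1 U" "l1norm U \<le> d * nx + ny * d"
    using l1_add[OF l1_Qop[OF xy x] l1_Qop[OF y xy]]
      l1norm_add_le[OF l1_Qop[OF xy x] l1_Qop[OF y xy]] l1norm_Qop_le[OF xy x] l1norm_Qop_le[OF y xy]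
    by (auto simp: U_def[abs_def] d_def nx_def ny_def)
  have W: "l1 (Qop T y y)" "l1norm (Qop T y y) \<le> ny * ny"
    using l1_Qop[OF y y] l1norm_Qop_le[OF y y] by (auto simp: ny_def)
  \<comment> \<open>no need to exclude \<open>nx = 0\<close> or \<open>ny = 0\<close>: division by zero yields zero on both sides\<close>
  have split: "Rop T x i - Rop T y i = 1 / nx * U i + (1 / nx - 1 / ny) * Qop T y y i" for i
    using Qop_diag_diff[OF x y, of i]
    by (simp add: Rop_eq_Qop U_def nx_def ny_def divide_inverse algebra_simps)
  have "l1norm (\<lambda>i. Rop T x i - Rop T y i) \<le> \<bar>1 / nx\<bar> * l1norm U + \<bar>1 / nx - 1 / ny\<bar> * l1norm (Qop T y y)"
    unfolding split l1norm_scale[OF U(1), symmetric] l1norm_scale[OF W(1), symmetric]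
    using U(1) W(1) by (intro l1norm_add_le l1_scale)
  also have "\<dots> \<le> \<bar>1 / nx\<bar> * (d * nx + ny * d) + \<bar>1 / nx - 1 / ny\<bar> * (ny * ny)"
    using U(2) W(2) by (intro add_mono mult_left_mono) auto
  also have "\<dots> \<le> 2 * d + (nx - ny)"
    using le \<open>ny \<ge> 0\<close> \<open>d \<ge> 0\<close> by (intro Rop_split_estimate) (auto simp: nx_def ny_def)
  finally show ?thesis by (simp add: nx_def ny_def d_def)
qed

lemma l1norm_Rop_diff_le:
  assumes "l1 x" "l1 y"
  shows "l1norm (\<lambda>i. Rop T x i - Rop T y i)
    \<le> 2 * l1norm (\<lambda>k. x k - y k) + \<bar>l1norm x - l1norm y\<bar>"
proof (cases "l1norm y \<le> l1norm x")
  case True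
  then show ?thesis using l1norm_Rop_diff_le_of_le[OF assms] by simp
next
  case False
  then show ?thesis
    using l1norm_Rop_diff_le_of_le[OF assms(2,1)]
      l1norm_diff_commute[of "Rop T x"] l1norm_diff_commute[of x] by simp
qed

end

theorem proposition1:
  fixes T :: "nat \<Rightarrow> nat \<Rightarrow> nat \<Rightarrow> nat \<Rightarrow> real"
  assumes nonneg: "\<And>i j k l. T i j k l \<ge> 0"
    and total: "\<And>k l. ((\<lambda>(i,j). T i j k l) has_sum 1) UNIV"
  shows "(\<forall>x. l1 x \<longrightarrow> l1 (Rop T x))
    \<and> (\<forall>x y. l1 x \<longrightarrow> l1 y \<longrightarrow>
         l1norm (\<lambda>i. Rop T x i - Rop T y i) \<le> 3 * l1norm (\<lambda>i. x i - y i))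
    \<and> (\<forall>r x y. r > 0 \<longrightarrow> l1 x \<longrightarrow> l1 y \<longrightarrow> l1norm x = r \<longrightarrow> l1norm y = r \<longrightarrow>
         l1norm (\<lambda>i. Rop T x i - Rop T y i) \<le> 2 * l1norm (\<lambda>i. x i - y i))"
proof -
  interpret stochastic_kernel T
    using nonneg total by unfold_locales
  have "l1norm (\<lambda>i. Rop T x i - Rop T y i) \<le> 3 * l1norm (\<lambda>i. x i - y i)"
    if "l1 x" "l1 y" for x y
    using l1norm_Rop_diff_le[OF that] l1norm_reverse_triangle[OF that] by linarith
  moreover have "l1norm (\<lambda>i. Rop T x i - Rop T y i) \<le> 2 * l1norm (\<lambda>i. x i - y i)"
    if "l1 x" "l1 y" "l1norm x = l1norm y" for x y
    using l1norm_Rop_diff_le[OF that(1,2)] that(3) by simp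
  ultimately show ?thesis
    using l1_Rop by auto
qed

end
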